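(* For any Euclidean function $\sigma$ on an integral domain $A$, the following conditions are equivalent: (a) $\sigma$ is non-archimedean and satisfies $\sigma(ab) = \sigma(a)+\sigma(b)$ for all $a,b \in A$. (b) The function $2^\sigma: A \to \mathbb{N}$, $a\mapsto 2^{\sigma(a)}$, is a non-archimedean norm on the domain $A$. (c) The function $2^\sigma$ is a norm on $A$, and the prime subring of $A$ is contained in $\{a \in A: \sigma(a) \leq \sigma(1)\} = A^\times \cup \{0\}$. (d) The function $2^\sigma$ is a norm on $A$, and $A$ contains a field. (e) The factroids of $A$ are the sets $C_n := \{a \in A: \sigma(a) \leq n\}$ for all $n \in \sigma(A) \cup \{\infty\}$ (which are distinct for all $n \in \sigma(A)$), and the level sets $D_n := \{a \in A: \sigma(a) = n\}$ satisfy $D_m D_n \subseteq D_{m+n}$ for all $m,n \in \sigma(A)$. Moreover, a domain $A$ admits a Euclidean function satisfying the equivalent conditions above if and only if $A$ is a field or $A \cong k[x]$ for some field $k$.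
   Context: A Euclidean function on an integral domain $A$ is a function $\sigma:A\to\mathbb{N}\cup\{-\infty\}$ such that $\sigma(a)=-\infty$ iff $a=0$; for all $a,b\in A$ with $b\neq 0$ there exist $q,r\in A$ with $a=bq+r$ and $\sigma(r)<\sigma(b)$; and $\sigma(a)\le\sigma(ab)$ for all $a,b$ with $b\ne0$. It is non-archimedean if $\sigma(a+b)\le\max\{\sigma(a),\sigma(b)\}$. Here $2^{-\infty}=0$. A norm on $A$ is a function $N:A\to\mathbb{R}_{\ge0}$ with $N(a)=0$ iff $a=0$, $N(ab)=N(a)N(b)$ and $N(a+b)\le N(a)+N(b)$; it is non-archimedean if $N(a+b)\le\max\{N(a),N(b)\}$. A factroid of $A$ is an additive subgroup $F$ of $A$ such that $ba\in F$ with $b\ne 0$ implies $a\in F$. $D_mD_n=\{xy\mid x\in D_m, y\in D_n\}$. *)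

theory Defs
  imports "HOL-Library.Extended_Real" "HOL-Computational_Algebra.Polynomial"
begin

definition euclidean_function :: "('a::idom \<Rightarrow> ereal) \<Rightarrow> bool" where
  "euclidean_function \<sigma> \<longleftrightarrow>
     (\<forall>a. \<sigma> a = -\<infinity> \<longleftrightarrow> a = 0) \<and>
     (\<forall>a. a \<noteq> 0 \<longrightarrow> (\<exists>n::nat. \<sigma> a = ereal (real n))) \<and>
     (\<forall>a b. b \<noteq> 0 \<longrightarrow> (\<exists>q r. a = b * q + r \<and> \<sigma> r < \<sigma> b)) \<and>
     (\<forall>a b. b \<noteq> 0 \<longrightarrow> \<sigma> a \<le> \<sigma> (a * b))"

definition nonarch_euclidean :: "('a::idom \<Rightarrow> ereal) \<Rightarrow> bool" where
  "nonarch_euclidean \<sigma> \<longleftrightarrow> (\<forall>a b. \<sigma> (a + b) \<le> max (\<sigma> a) (\<sigma> b))"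

definition pow2 :: "ereal \<Rightarrow> real" where
  "pow2 x = (if x = -\<infinity> then 0 else 2 powr real_of_ereal x)"

definition is_norm :: "('a::idom \<Rightarrow> real) \<Rightarrow> bool" where
  "is_norm N \<longleftrightarrow>
     (\<forall>a. N a \<ge> 0) \<and> (\<forall>a. N a = 0 \<longleftrightarrow> a = 0) \<and>
     (\<forall>a b. N (a * b) = N a * N b) \<and> (\<forall>a b. N (a + b) \<le> N a + N b)"

definition nonarch_norm :: "('a::idom \<Rightarrow> real) \<Rightarrow> bool" where
  "nonarch_norm N \<longleftrightarrow> is_norm N \<and> (\<forall>a b. N (a + b) \<le> max (N a) (N b))"

definition factroid :: "'a::idom set \<Rightarrow> bool" where
  "factroid F \<longleftrightarrow>
     0 \<in> F \<and> (\<forall>x\<in>F. \<forall>y\<in>F. x + y \<in> F) \<and> (\<forall>x\<in>F. - x \<in> F) \<and>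
     (\<forall>a b. b \<noteq> 0 \<and> b * a \<in> F \<longrightarrow> a \<in> F)"

definition subfield :: "'a::idom set \<Rightarrow> bool" where
  "subfield K \<longleftrightarrow>
     0 \<in> K \<and> 1 \<in> K \<and> (\<forall>x\<in>K. \<forall>y\<in>K. x + y \<in> K \<and> x * y \<in> K) \<and> (\<forall>x\<in>K. - x \<in> K) \<and>
     (\<forall>x\<in>K. x \<noteq> 0 \<longrightarrow> (\<exists>y\<in>K. x * y = 1))"

definition is_field_dom :: "'a::idom itself \<Rightarrow> bool" where
  "is_field_dom _ \<longleftrightarrow> (\<forall>a::'a. a \<noteq> 0 \<longrightarrow> a dvd 1)"

text \<open>\<open>A \<cong> k[x]\<close> for a field \<open>k\<close>: internally, there is a subfield \<open>K\<close> and an element \<open>x\<close>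
  such that every element of \<open>A\<close> is uniquely a polynomial in \<open>x\<close> with coefficients in \<open>K\<close>.\<close>
definition is_poly_ring_over_field :: "'a::idom itself \<Rightarrow> bool" where
  "is_poly_ring_over_field _ \<longleftrightarrow>
     (\<exists>(K::'a set) x. subfield K \<and>
        (\<forall>a. \<exists>!p::'a poly. (\<forall>i. coeff p i \<in> K) \<and> poly p x = a))"

definition C_set :: "('a \<Rightarrow> ereal) \<Rightarrow> ereal \<Rightarrow> 'a set" where
  "C_set \<sigma> n = {a. \<sigma> a \<le> n}"

definition D_set :: "('a \<Rightarrow> ereal) \<Rightarrow> ereal \<Rightarrow> 'a set" where
  "D_set \<sigma> n = {a. \<sigma> a = n}"

definition cond_a :: "('a::idom \<Rightarrow> ereal) \<Rightarrow> bool" where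
  "cond_a \<sigma> \<longleftrightarrow> nonarch_euclidean \<sigma> \<and> (\<forall>a b. \<sigma> (a * b) = \<sigma> a + \<sigma> b)"

definition cond_b :: "('a::idom \<Rightarrow> ereal) \<Rightarrow> bool" where
  "cond_b \<sigma> \<longleftrightarrow> nonarch_norm (\<lambda>a. pow2 (\<sigma> a))"

definition cond_c :: "('a::idom \<Rightarrow> ereal) \<Rightarrow> bool" where
  "cond_c \<sigma> \<longleftrightarrow> is_norm (\<lambda>a. pow2 (\<sigma> a)) \<and> range (of_int :: int \<Rightarrow> 'a) \<subseteq> {a. \<sigma> a \<le> \<sigma> 1}"

definition cond_d :: "('a::idom \<Rightarrow> ereal) \<Rightarrow> bool" where
  "cond_d \<sigma> \<longleftrightarrow> is_norm (\<lambda>a. pow2 (\<sigma> a)) \<and> (\<exists>K::'a set. subfield K)"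

definition cond_e :: "('a::idom \<Rightarrow> ereal) \<Rightarrow> bool" where
  "cond_e \<sigma> \<longleftrightarrow>
     {F. factroid F} = C_set \<sigma> ` (range \<sigma> \<union> {\<infinity>}) \<and>
     inj_on (C_set \<sigma>) (range \<sigma>) \<and>
     (\<forall>m\<in>range \<sigma>. \<forall>n\<in>range \<sigma>.
        {x * y | x y. x \<in> D_set \<sigma> m \<and> y \<in> D_set \<sigma> n} \<subseteq> D_set \<sigma> (m + n))"

end

(*
  Let \<nu> a be the natural number \<sigma> a (for a \<noteq> 0).  If \<sigma> is non-archimedean and additive,
  the elements of degree 0 are 0 and the units, and they form a subfield K.  Unless A is a field,
  take x of least positive degree: the remainder of a division by x lies in K, so every element is
  a polynomial in x over K, uniquely because \<nu> (p(x)) = \<nu> x * deg p.  Hence all degrees are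
  multiples of \<nu> x, and a factroid containing a \<noteq> 0 contains every b with \<nu> b \<le> \<nu> a
  (divide b by a and a by x, and induct on \<nu> a); this classifies the factroids.  Conversely, on
  K[x] the degree is such a Euclidean function.

  Conditions (b)-(d) are (a) seen through N = 2^\<sigma>.  A norm with values in powers of 2 is
  non-archimedean as soon as N 2 \<le> 1: otherwise N (a + b) \<ge> 2 max (N a) (N b), whereas
  N (a + b)^2 \<le> N a^2 + N 2 N a N b + N b^2.  And N 2 \<le> 1 when 2 is 0 or a unit, which holds
  if the nonzero integers are units (their quotients then form a subfield) or A contains a field.
*)
theory Submission
  imports Defs
begin

lemma pow2_minus_infinity [simp]: "pow2 (-\<infinity>) = 0"
  by (simp add: pow2_def)

lemma power_of_two_gap:
  assumes "(2::real) ^ m < 2 ^ k"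
  shows "2 * 2 ^ m \<le> (2::real) ^ k"
proof -
  have "Suc m \<le> k" using assms by (simp add: Suc_le_eq)
  then show ?thesis using power_increasing[of "Suc m" k "2::real"] by simp
qed

lemma norm_add_square_le:
  assumes "is_norm N"
  shows "N (a + b) * N (a + b) \<le> N a * N a + N 2 * (N a * N b) + N b * N b"
proof -
  have mult: "N (u * v) = N u * N v" and tri: "N (u + v) \<le> N u + N v" for u v
    using assms unfolding is_norm_def by blast+
  have "N (a + b) * N (a + b) = N (a * a + 2 * (a * b) + b * b)"
    by (simp add: mult [symmetric] algebra_simps)
  also have "\<dots> \<le> N (a * a) + N (2 * (a * b)) + N (b * b)"
    using tri [of "a * a + 2 * (a * b)" "b * b"] tri [of "a * a" "2 * (a * b)"] by linarith
  finally show ?thesis by (simp add: mult)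
qed

lemma nonarch_norm_if_norm_two_le_one:
  fixes N :: "'a::idom \<Rightarrow> real"
  assumes norm: "is_norm N" and two: "N 2 \<le> 1"
    and powers_of_two: "\<And>a. a \<noteq> 0 \<Longrightarrow> \<exists>n::nat. N a = 2 ^ n"
  shows "nonarch_norm N"
proof -
  have nonneg: "0 \<le> N a" and zero_iff: "N a = 0 \<longleftrightarrow> a = 0" for a
    using norm unfolding is_norm_def by blast+
  have "N (a + b) \<le> max (N a) (N b)" for a b
  proof (rule ccontr)
    define X where "X = max (N a) (N b)"
    assume "\<not> N (a + b) \<le> max (N a) (N b)"
    then have less: "X < N (a + b)" unfolding X_def by (rule not_le_imp_less)
    have le_X: "N a \<le> X" "N b \<le> X" by (simp_all add: X_def)
    then have "0 \<le> X" using nonneg [of a] by linarith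
    obtain c where c: "X = N c" by (metis X_def max_def)
    have "c \<noteq> 0"
    proof
      assume "c = 0"
      then have "N a = 0" "N b = 0" using le_X nonneg [of a] nonneg [of b] zero_iff [of 0] c by simp_all
      then show False using less c \<open>c = 0\<close> zero_iff by simp
    qed
    then obtain m where m: "X = 2 ^ m" using powers_of_two c by blast
    have "a + b \<noteq> 0" using less \<open>0 \<le> X\<close> zero_iff [of "a + b"] by auto
    then obtain k where k: "N (a + b) = 2 ^ k" using powers_of_two by blast
    have "2 * X \<le> N (a + b)" using power_of_two_gap less by (simp add: m k)
    then have "(2 * X) * (2 * X) \<le> N (a + b) * N (a + b)"
      using m nonneg by (intro mult_mono) simp_all
    also have "\<dots> \<le> X * X + 1 * (X * X) + X * X"
    proof -
      have "N a \<le> X" "N b \<le> X" "0 \<le> X" using m by (simp_all add: X_def)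
      then have "N a * N a \<le> X * X" "N b * N b \<le> X * X" "N 2 * (N a * N b) \<le> 1 * (X * X)"
        using nonneg two by (intro mult_mono mult_nonneg_nonneg; simp)+
      then show ?thesis using norm_add_square_le [OF norm, of a b] by linarith
    qed
    finally show False using m by simp
  qed
  then show ?thesis using norm unfolding nonarch_norm_def by blast
qed

lemma factroid_zero: "factroid F \<Longrightarrow> 0 \<in> F"
  and factroid_add: "factroid F \<Longrightarrow> a \<in> F \<Longrightarrow> b \<in> F \<Longrightarrow> a + b \<in> F"
  and factroid_uminus: "factroid F \<Longrightarrow> a \<in> F \<Longrightarrow> - a \<in> F"
  and factroid_cancel: "factroid F \<Longrightarrow> c \<noteq> 0 \<Longrightarrow> c * a \<in> F \<Longrightarrow> a \<in> F"
  unfolding factroid_def by blast+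

lemma factroid_diff: "factroid F \<Longrightarrow> a \<in> F \<Longrightarrow> b \<in> F \<Longrightarrow> a - b \<in> F"
  using factroid_add [of F a "- b"] factroid_uminus [of F b] by simp

lemma factroid_mult_unit:
  assumes "factroid F" "a \<in> F" "u dvd 1"
  shows "a * u \<in> F"
proof -
  obtain v where v: "1 = u * v" using \<open>u dvd 1\<close> by (rule dvdE)
  then have "v \<noteq> 0" "v * (a * u) = a" by (auto simp: ac_simps)
  then show ?thesis using assms factroid_cancel by metis
qed

lemma factroid_unit:
  assumes "factroid F" "a \<in> F" "a \<noteq> 0" "u dvd 1"
  shows "u \<in> F"
proof -
  have "1 \<in> F" using factroid_cancel [OF \<open>factroid F\<close> \<open>a \<noteq> 0\<close>, of 1] \<open>a \<in> F\<close> by simp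
  then show ?thesis using factroid_mult_unit [OF \<open>factroid F\<close> _ \<open>u dvd 1\<close>] by fastforce
qed

lemma inj_on_C_set: "inj_on (C_set \<sigma>) (range \<sigma>)"
proof (rule inj_onI)
  fix u v assume "u \<in> range \<sigma>" "v \<in> range \<sigma>" and eq: "C_set \<sigma> u = C_set \<sigma> v"
  then obtain a b where ab: "u = \<sigma> a" "v = \<sigma> b" by blast
  have "a \<in> C_set \<sigma> v" "b \<in> C_set \<sigma> u" using eq by (auto simp: C_set_def ab)
  then show "u = v" by (simp add: C_set_def ab)
qed

lemma cond_e_imp_cond_a:
  assumes e: "cond_e \<sigma>"
  shows "cond_a \<sigma>"
proof -
  have "\<sigma> (a * b) = \<sigma> a + \<sigma> b" for a b
  proof -
    have "a * b \<in> {x * y | x y. x \<in> D_set \<sigma> (\<sigma> a) \<and> y \<in> D_set \<sigma> (\<sigma> b)}"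
      by (auto simp: D_set_def)
    then have "a * b \<in> D_set \<sigma> (\<sigma> a + \<sigma> b)" using e unfolding cond_e_def by blast
    then show ?thesis by (simp add: D_set_def)
  qed
  moreover have "\<sigma> (a + b) \<le> max (\<sigma> a) (\<sigma> b)" for a b
  proof -
    let ?C = "C_set \<sigma> (max (\<sigma> a) (\<sigma> b))"
    have "factroid ?C" using e unfolding cond_e_def by (auto simp: max_def)
    moreover have "a \<in> ?C" "b \<in> ?C" by (simp_all add: C_set_def)
    ultimately show ?thesis using factroid_add by (fastforce simp: C_set_def)
  qed
  ultimately show ?thesis by (simp add: cond_a_def nonarch_euclidean_def)
qed

lemma subfield_zero: "subfield K \<Longrightarrow> 0 \<in> K"
  and subfield_one: "subfield K \<Longrightarrow> 1 \<in> K"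
  and subfield_add: "subfield K \<Longrightarrow> u \<in> K \<Longrightarrow> v \<in> K \<Longrightarrow> u + v \<in> K"
  and subfield_mult: "subfield K \<Longrightarrow> u \<in> K \<Longrightarrow> v \<in> K \<Longrightarrow> u * v \<in> K"
  and subfield_uminus: "subfield K \<Longrightarrow> u \<in> K \<Longrightarrow> - u \<in> K"
  and subfield_inverse: "subfield K \<Longrightarrow> u \<in> K \<Longrightarrow> u \<noteq> 0 \<Longrightarrow> \<exists>v\<in>K. u * v = 1"
  unfolding subfield_def by blast+

lemma subfield_diff: "subfield K \<Longrightarrow> u \<in> K \<Longrightarrow> v \<in> K \<Longrightarrow> u - v \<in> K"
  using subfield_add [of K u "- v"] subfield_uminus [of K v] by simp

lemma subfield_sum: "subfield K \<Longrightarrow> (\<And>i. i \<in> A \<Longrightarrow> f i \<in> K) \<Longrightarrow> sum f A \<in> K"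
  by (induction A rule: infinite_finite_induct) (auto intro: subfield_zero subfield_add)

text \<open>The prime field of \<open>A\<close>, once every nonzero integer is a unit.\<close>
definition int_quotients :: "'a::idom set" where
  "int_quotients = {a. \<exists>m n. of_int n \<noteq> (0::'a) \<and> of_int n * a = of_int m}"

lemma of_int_in_int_quotients: "of_int m \<in> int_quotients"
  unfolding int_quotients_def by (rule CollectI, rule exI [of _ m], rule exI [of _ 1]) simp

lemma subfield_int_quotients:
  assumes units: "\<And>k. of_int k \<noteq> (0::'a::idom) \<Longrightarrow> of_int k dvd (1::'a)"
  shows "subfield (int_quotients :: 'a set)"
  unfolding subfield_def
proof (intro conjI ballI impI)
  show "0 \<in> int_quotients" "1 \<in> int_quotients"
    using of_int_in_int_quotients [of 0] of_int_in_int_quotients [of 1] by simp_all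
next
  fix a b :: 'a assume "a \<in> int_quotients" "b \<in> int_quotients"
  then obtain m n m' n' where
    a: "of_int n \<noteq> (0::'a)" "of_int n * a = of_int m" and
    b: "of_int n' \<noteq> (0::'a)" "of_int n' * b = of_int m'"
    unfolding int_quotients_def by blast
  have "of_int (n * n') \<noteq> (0::'a)" using a b by simp
  moreover have "of_int (n * n') * (a + b) = of_int n' * (of_int n * a) + of_int n * (of_int n' * b)"
    and "of_int (n * n') * (a * b) = (of_int n * a) * (of_int n' * b)"
    by (simp_all add: algebra_simps)
  then have "of_int (n * n') * (a + b) = (of_int (n' * m + n * m') :: 'a)"
    and "of_int (n * n') * (a * b) = (of_int (m * m') :: 'a)"
    by (simp_all only: a b) simp_all
  ultimately show "a + b \<in> int_quotients" "a * b \<in> int_quotients"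
    unfolding int_quotients_def by blast+
next
  fix a :: 'a assume "a \<in> int_quotients"
  then obtain m n where a: "of_int n \<noteq> (0::'a)" "of_int n * a = of_int m"
    unfolding int_quotients_def by blast
  have "of_int n * (- a) = (of_int (- m) :: 'a)" using a by simp
  then show "- a \<in> int_quotients" unfolding int_quotients_def using a by blast
  assume "a \<noteq> 0"
  then have "of_int m \<noteq> (0::'a)" using a by auto
  then obtain w where w: "1 = (of_int m :: 'a) * w" using units by (meson dvdE)
  have "a * (of_int n * w) = (of_int n * a) * w" by (simp add: ac_simps)
  also have "\<dots> = 1" by (simp only: a(2) w)
  finally have "a * (of_int n * w) = 1" .
  moreover have "of_int m * (of_int n * w) = (of_int n :: 'a)" using w by (simp add: ac_simps)
  ultimately show "\<exists>b\<in>int_quotients. a * b = 1"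
    unfolding int_quotients_def using \<open>of_int m \<noteq> 0\<close> by blast
qed

lemma coeffs_in_pCons_iff: "range (coeff (pCons c p)) \<subseteq> K \<longleftrightarrow> c \<in> K \<and> range (coeff p) \<subseteq> K"
  by (metis (no_types, opaque_lifting) coeff_pCons_0 coeff_pCons_Suc
      image_subsetI old.nat.exhaust range_subsetD)

lemma coeffs_in_subfield_diff:
  "subfield K \<Longrightarrow> range (coeff p) \<subseteq> K \<Longrightarrow> range (coeff q) \<subseteq> K \<Longrightarrow> range (coeff (p - q)) \<subseteq> K"
  by (auto intro: subfield_diff)

lemma coeffs_in_subfield_add:
  "subfield K \<Longrightarrow> range (coeff p) \<subseteq> K \<Longrightarrow> range (coeff q) \<subseteq> K \<Longrightarrow> range (coeff (p + q)) \<subseteq> K"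
  by (auto intro: subfield_add)

lemma coeffs_in_subfield_mult:
  "subfield K \<Longrightarrow> range (coeff p) \<subseteq> K \<Longrightarrow> range (coeff q) \<subseteq> K \<Longrightarrow> range (coeff (p * q)) \<subseteq> K"
  unfolding image_subset_iff coeff_mult by (blast intro: subfield_sum subfield_mult)

lemma coeffs_in_subfield_monom: "subfield K \<Longrightarrow> c \<in> K \<Longrightarrow> range (coeff (monom c n)) \<subseteq> K"
  by (auto simp: coeff_monom intro: subfield_zero)

lemma degree_cancel_lead_coeff:
  fixes p g :: "'a::idom poly"
  assumes "degree g \<le> degree p" and "c * lead_coeff g = lead_coeff p"
  defines "h \<equiv> p - monom c (degree p - degree g) * g"
  shows "h = 0 \<or> degree h < degree p"
proof -
  have "degree (monom c (degree p - degree g) * g) \<le> degree (monom c (degree p - degree g)) + degree g"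
    by (rule degree_mult_le)
  also have "\<dots> \<le> degree p"
    using degree_monom_le [of c "degree p - degree g"] assms(1) by linarith
  finally have "degree h \<le> degree p" unfolding h_def by (simp add: degree_diff_le)
  moreover have "coeff h (degree p) = 0"
    using assms by (simp add: h_def coeff_monom_mult)
  ultimately show ?thesis using degree_less_if_less_eqI by blast
qed

locale euclidean_fun =
  fixes \<sigma> :: "'a::idom \<Rightarrow> ereal"
  assumes euclidean: "euclidean_function \<sigma>"
begin

text \<open>\<open>\<sigma>\<close> as a natural number, with the junk value \<open>\<nu> 0 = 0\<close>.\<close>
definition \<nu> :: "'a \<Rightarrow> nat" where "\<nu> a = nat \<lfloor>real_of_ereal (\<sigma> a)\<rfloor>"

lemma sigma_eq_minus_infinity_iff: "\<sigma> a = -\<infinity> \<longleftrightarrow> a = 0"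
  using euclidean unfolding euclidean_function_def by blast

lemma sigma_zero [simp]: "\<sigma> 0 = -\<infinity>"
  by (simp add: sigma_eq_minus_infinity_iff)

lemma nu_zero [simp]: "\<nu> 0 = 0"
  by (simp add: \<nu>_def)

lemma sigma_eq_nu: "a \<noteq> 0 \<Longrightarrow> \<sigma> a = ereal (real (\<nu> a))"
  using euclidean unfolding euclidean_function_def \<nu>_def by force

lemma nu_le_nu_mult:
  assumes "b \<noteq> 0"
  shows "\<nu> a \<le> \<nu> (a * b)"
proof (cases "a = 0")
  case False
  have "\<sigma> a \<le> \<sigma> (a * b)" using euclidean assms unfolding euclidean_function_def by blast
  then show ?thesis using False assms by (simp add: sigma_eq_nu)
qed simp

lemma nu_division:
  assumes "b \<noteq> 0"
  shows "\<exists>q r. a = b * q + r \<and> (r = 0 \<or> \<nu> r < \<nu> b)"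
proof -
  obtain q r where "a = b * q + r" "\<sigma> r < \<sigma> b"
    using euclidean assms unfolding euclidean_function_def by blast
  moreover from this have "r = 0 \<or> \<nu> r < \<nu> b"
    using assms by (cases "r = 0") (simp_all add: sigma_eq_nu)
  ultimately show ?thesis by blast
qed

lemma nu_one_le: "a \<noteq> 0 \<Longrightarrow> \<nu> 1 \<le> \<nu> a"
  using nu_le_nu_mult [of a 1] by simp

lemma nu_le_nu_one_iff: "a \<noteq> 0 \<Longrightarrow> \<nu> a \<le> \<nu> 1 \<longleftrightarrow> a dvd 1"
proof
  assume "a \<noteq> 0" "\<nu> a \<le> \<nu> 1"
  obtain q r where "1 = a * q + r" "r = 0 \<or> \<nu> r < \<nu> a"
    using nu_division [OF \<open>a \<noteq> 0\<close>] by blast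
  moreover from this have "r = 0" using \<open>\<nu> a \<le> \<nu> 1\<close> nu_one_le [of r] by linarith
  ultimately show "a dvd 1" by (metis add.right_neutral dvd_triv_left)
next
  assume "a dvd 1"
  then obtain q where "1 = a * q" by (rule dvdE)
  then show "\<nu> a \<le> \<nu> 1" using nu_le_nu_mult [of q a] by force
qed

lemma sigma_le_sigma_one: "{a. \<sigma> a \<le> \<sigma> 1} = {a. a dvd 1} \<union> {0}"
proof -
  have "\<sigma> a \<le> \<sigma> 1 \<longleftrightarrow> a dvd 1 \<or> a = 0" for a
    by (cases "a = 0") (simp_all add: sigma_eq_nu nu_le_nu_one_iff)
  then show ?thesis by blast
qed

lemma pow2_sigma: "pow2 (\<sigma> a) = (if a = 0 then 0 else 2 ^ \<nu> a)"
  by (simp add: pow2_def sigma_eq_nu powr_realpow)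

lemma sigma_mult_iff:
  "\<sigma> (a * b) = \<sigma> a + \<sigma> b \<longleftrightarrow> (a \<noteq> 0 \<longrightarrow> b \<noteq> 0 \<longrightarrow> \<nu> (a * b) = \<nu> a + \<nu> b)"
  by (cases "a = 0"; cases "b = 0") (simp_all add: sigma_eq_nu flip: of_nat_add)

lemma pow2_sigma_mult_iff:
  "pow2 (\<sigma> (a * b)) = pow2 (\<sigma> a) * pow2 (\<sigma> b) \<longleftrightarrow>
     (a \<noteq> 0 \<longrightarrow> b \<noteq> 0 \<longrightarrow> \<nu> (a * b) = \<nu> a + \<nu> b)"
  by (cases "a = 0"; cases "b = 0") (simp_all add: pow2_sigma flip: power_add)

lemma sigma_ultra_iff: "\<sigma> (a + b) \<le> max (\<sigma> a) (\<sigma> b) \<longleftrightarrow> \<nu> (a + b) \<le> max (\<nu> a) (\<nu> b)"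
  by (cases "a = 0"; cases "b = 0"; cases "a + b = 0") (simp_all add: sigma_eq_nu max_def)

lemma pow2_sigma_ultra_iff:
  "pow2 (\<sigma> (a + b)) \<le> max (pow2 (\<sigma> a)) (pow2 (\<sigma> b)) \<longleftrightarrow> \<nu> (a + b) \<le> max (\<nu> a) (\<nu> b)"
  by (cases "a = 0"; cases "b = 0"; cases "a + b = 0") (simp_all add: pow2_sigma max_def)

lemma cond_a_iff_cond_b: "cond_a \<sigma> \<longleftrightarrow> cond_b \<sigma>"
proof -
  have "0 \<le> pow2 (\<sigma> a)" and "pow2 (\<sigma> a) = 0 \<longleftrightarrow> a = 0" for a
    by (simp_all add: pow2_sigma)
  moreover have "max (pow2 (\<sigma> a)) (pow2 (\<sigma> b)) \<le> pow2 (\<sigma> a) + pow2 (\<sigma> b)" for a b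
    by (simp add: pow2_sigma)
  ultimately have "nonarch_norm (\<lambda>a. pow2 (\<sigma> a)) \<longleftrightarrow>
      (\<forall>a b. pow2 (\<sigma> (a * b)) = pow2 (\<sigma> a) * pow2 (\<sigma> b)) \<and>
      (\<forall>a b. pow2 (\<sigma> (a + b)) \<le> max (pow2 (\<sigma> a)) (pow2 (\<sigma> b)))"
    unfolding nonarch_norm_def is_norm_def by (metis order_trans)
  then show ?thesis
    unfolding cond_a_def cond_b_def nonarch_euclidean_def
      sigma_mult_iff sigma_ultra_iff pow2_sigma_mult_iff pow2_sigma_ultra_iff
    by blast
qed

lemma C_set_sigma:
  assumes "a \<noteq> 0"
  shows "C_set \<sigma> (\<sigma> a) = {b. \<nu> b \<le> \<nu> a}"
proof -
  have "\<sigma> b \<le> \<sigma> a \<longleftrightarrow> \<nu> b \<le> \<nu> a" for b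
    using assms by (cases "b = 0") (simp_all add: sigma_eq_nu)
  then show ?thesis by (simp add: C_set_def)
qed

lemma cond_c_imp_cond_d: "cond_c \<sigma> \<Longrightarrow> cond_d \<sigma>"
proof -
  assume c: "cond_c \<sigma>"
  have "of_int k dvd (1::'a)" if "of_int k \<noteq> (0::'a)" for k
    using c that sigma_le_sigma_one unfolding cond_c_def by blast
  then have "subfield (int_quotients :: 'a set)" by (rule subfield_int_quotients)
  then show ?thesis using c unfolding cond_c_def cond_d_def by blast
qed

lemma cond_d_imp_cond_b: "cond_d \<sigma> \<Longrightarrow> cond_b \<sigma>"
proof -
  define N :: "'a \<Rightarrow> real" where "N = (\<lambda>a. pow2 (\<sigma> a))"
  assume d: "cond_d \<sigma>"
  then have norm: "is_norm N" unfolding cond_d_def N_def by blast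
  then have mult: "N (a * b) = N a * N b" and nonneg: "0 \<le> N a" and zero_iff: "N a = 0 \<longleftrightarrow> a = 0"
    for a b unfolding is_norm_def by blast+
  have powers: "\<exists>n::nat. N a = 2 ^ n" if "a \<noteq> 0" for a
    using that by (simp add: N_def pow2_sigma)
  have "N 2 \<le> 1"
  proof (cases "(2::'a) = 0")
    case False
    obtain K :: "'a set" where K: "subfield K" using d unfolding cond_d_def by blast
    then have "(2::'a) \<in> K" using subfield_add [OF K subfield_one subfield_one] by simp
    then obtain v where v: "2 * v = (1::'a)" using subfield_inverse [OF K _ False] by blast
    have "N 1 = 1" using mult [of 1 1] zero_iff [of 1] by simp
    then have "N 2 * N v = 1" using mult [of 2 v] v by simp
    moreover have "1 \<le> N v" using powers [of v] v by force
    ultimately show ?thesis using nonneg [of 2] by (metis mult_left_mono mult.right_neutral)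
  qed (simp add: N_def)
  then have "nonarch_norm N" using nonarch_norm_if_norm_two_le_one [OF norm _ powers] by blast
  then show "cond_b \<sigma>" by (simp add: cond_b_def N_def)
qed

end

locale degree_euclidean = euclidean_fun +
  assumes condition_a: "cond_a \<sigma>"
begin

lemma nu_mult: "a \<noteq> 0 \<Longrightarrow> b \<noteq> 0 \<Longrightarrow> \<nu> (a * b) = \<nu> a + \<nu> b"
  using condition_a unfolding cond_a_def sigma_mult_iff by blast

lemma nu_add_le: "\<nu> (a + b) \<le> max (\<nu> a) (\<nu> b)"
  using condition_a unfolding cond_a_def nonarch_euclidean_def sigma_ultra_iff by blast

lemma nu_one [simp]: "\<nu> 1 = 0"
  using nu_mult [of 1 1] by simp

lemma nu_eq_0_iff: "\<nu> a = 0 \<longleftrightarrow> a = 0 \<or> a dvd 1"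
  using nu_le_nu_one_iff [of a] by (cases "a = 0") auto

lemma nu_uminus [simp]: "\<nu> (- a) = \<nu> a"
proof -
  have "\<nu> (- 1) = 0" by (simp add: nu_eq_0_iff)
  then show ?thesis using nu_mult [of "- 1" a] by (cases "a = 0") simp_all
qed

lemma nu_diff_le: "\<nu> (a - b) \<le> max (\<nu> a) (\<nu> b)"
  using nu_add_le [of a "- b"] by simp

lemma nu_add_eq_left: "\<nu> b < \<nu> a \<Longrightarrow> \<nu> (a + b) = \<nu> a"
  using nu_add_le [of a b] nu_diff_le [of "a + b" b] by (simp add: max_def split: if_splits)

lemma nu_of_int [simp]: "\<nu> (of_int k) = 0"
proof -
  have nat: "\<nu> (of_nat n) = 0" for n
  proof (induction n)
    case (Suc n)
    then show ?case using nu_add_le [of 1 "of_nat n"] by simp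
  qed simp
  show ?thesis by (cases k rule: int_cases2) (simp_all add: nat)
qed

lemma sigma_uminus [simp]: "\<sigma> (- a) = \<sigma> a"
  by (cases "a = 0") (simp_all add: sigma_eq_nu)

lemma sigma_add_le: "\<sigma> (a + b) \<le> max (\<sigma> a) (\<sigma> b)"
  using condition_a unfolding cond_a_def nonarch_euclidean_def by blast

lemma cond_c_holds: "cond_c \<sigma>"
proof -
  have "is_norm (\<lambda>a. pow2 (\<sigma> a))"
    using condition_a cond_a_iff_cond_b unfolding cond_b_def nonarch_norm_def by blast
  moreover have "\<sigma> (of_int k) \<le> \<sigma> 1" for k
    by (cases "of_int k = (0::'a)") (simp_all add: sigma_eq_nu)
  ultimately show ?thesis unfolding cond_c_def by blast
qed

definition constants :: "'a set" where "constants = {a. \<nu> a = 0}"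

lemma subfield_constants: "subfield constants"
  unfolding subfield_def constants_def
proof (intro conjI ballI impI; simp)
  fix a b assume "\<nu> a = 0" "\<nu> b = 0"
  then show "\<nu> (a + b) = 0" "\<nu> (a * b) = 0"
    using nu_add_le [of a b] nu_mult [of a b] by (simp, cases "a = 0 \<or> b = 0") auto
next
  fix a assume "\<nu> a = 0" "a \<noteq> 0"
  then obtain b where "1 = a * b" using nu_eq_0_iff by (meson dvdE)
  moreover from this have "\<nu> b = 0" using nu_mult [of a b] by force
  ultimately show "\<exists>b. \<nu> b = 0 \<and> a * b = 1" by auto
qed

lemma factroid_C_set: "factroid (C_set \<sigma> n)"
  unfolding factroid_def C_set_def
proof (intro conjI ballI allI impI; simp)
  fix a b assume "\<sigma> a \<le> n" "\<sigma> b \<le> n"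
  then show "\<sigma> (a + b) \<le> n" using sigma_add_le [of a b] by (meson max.boundedI order_trans)
next
  fix a b :: 'a assume "b \<noteq> 0 \<and> \<sigma> (b * a) \<le> n"
  then show "\<sigma> a \<le> n"
    using euclidean unfolding euclidean_function_def by (metis mult.commute order_trans)
qed

end

locale degree_euclidean_generator = degree_euclidean +
  fixes x :: 'a
  assumes nu_x_pos: "0 < \<nu> x" and nu_x_least: "0 < \<nu> a \<Longrightarrow> \<nu> x \<le> \<nu> a"
begin

lemma x_nonzero: "x \<noteq> 0"
  using nu_x_pos by auto

lemma divide_by_x:
  assumes "0 < \<nu> a"
  obtains q r where "a = x * q + r" "r \<in> constants" "q \<noteq> 0" "\<nu> a = \<nu> x + \<nu> q"
proof -
  obtain q r where a: "a = x * q + r" and "r = 0 \<or> \<nu> r < \<nu> x"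
    using nu_division [OF x_nonzero] by blast
  then have r: "\<nu> r = 0" using nu_x_least [of r] by (cases "r = 0") auto
  have "x * q = a + - r" using a by simp
  then have "\<nu> (x * q) = \<nu> a" using nu_add_eq_left [of "- r" a] r assms by simp
  then have "q \<noteq> 0" using assms by auto
  then have "\<nu> a = \<nu> x + \<nu> q" using nu_mult [OF x_nonzero] \<open>\<nu> (x * q) = \<nu> a\<close> by simp
  with \<open>q \<noteq> 0\<close> show thesis using that [OF a] r by (simp add: constants_def)
qed

lemma nu_poly_x:
  assumes "range (coeff p) \<subseteq> constants" "p \<noteq> 0"
  shows "poly p x \<noteq> 0 \<and> \<nu> (poly p x) = \<nu> x * degree p"
  using assms
proof (induction p rule: pCons_induct)
  case (pCons c p)
  then have c: "\<nu> c = 0" and p: "range (coeff p) \<subseteq> constants"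
    by (simp_all add: coeffs_in_pCons_iff constants_def)
  show ?case
  proof (cases "p = 0")
    case False
    with pCons.IH p have "poly p x \<noteq> 0" "\<nu> (poly p x) = \<nu> x * degree p" by auto
    then have xp: "\<nu> (x * poly p x) = \<nu> x * degree (pCons c p)"
      using nu_mult [OF x_nonzero] False by simp
    then have "\<nu> c < \<nu> (x * poly p x)" using c nu_x_pos False by simp
    then have "\<nu> (poly (pCons c p) x) = \<nu> x * degree (pCons c p)"
      using nu_add_eq_left xp by (simp add: add.commute)
    moreover have "0 < \<nu> x * degree (pCons c p)" using nu_x_pos False by simp
    ultimately show ?thesis by force
  qed (use pCons.hyps c in simp)
qed simp

lemma poly_x_exists: "\<exists>p. range (coeff p) \<subseteq> constants \<and> poly p x = a"
proof (induction "\<nu> a" arbitrary: a rule: less_induct)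
  case less
  show ?case
  proof (cases "\<nu> a = 0")
    case True
    then have "range (coeff [:a:]) \<subseteq> constants"
      by (simp add: coeffs_in_pCons_iff constants_def)
    then show ?thesis by (intro exI [of _ "[:a:]"]) simp
  next
    case False
    then have "0 < \<nu> a" by simp
    then obtain q r where qr: "a = x * q + r" "r \<in> constants" "\<nu> a = \<nu> x + \<nu> q"
      by (rule divide_by_x)
    then have "\<nu> q < \<nu> a" using nu_x_pos by simp
    then obtain p where "range (coeff p) \<subseteq> constants" "poly p x = q" using less by blast
    then show ?thesis using qr
      by (intro exI [of _ "pCons r p"]) (simp add: coeffs_in_pCons_iff add.commute)
  qed
qed

lemma poly_x_unique:
  assumes "range (coeff p) \<subseteq> constants" "range (coeff q) \<subseteq> constants" "poly p x = poly q x"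
  shows "p = q"
proof (rule ccontr)
  assume "p \<noteq> q"
  moreover have "range (coeff (p - q)) \<subseteq> constants"
    using coeffs_in_subfield_diff [OF subfield_constants assms(1,2)] .
  ultimately have "poly (p - q) x \<noteq> 0" using nu_poly_x [of "p - q"] by simp
  then show False using assms(3) by simp
qed

lemma is_poly_ring: "is_poly_ring_over_field TYPE('a)"
  unfolding is_poly_ring_over_field_def
proof (intro exI conjI allI)
  show "subfield constants" by (rule subfield_constants)
  fix a
  obtain p where p: "range (coeff p) \<subseteq> constants" "poly p x = a" using poly_x_exists by blast
  show "\<exists>!p. (\<forall>i. coeff p i \<in> constants) \<and> poly p x = a"
  proof (rule ex1I [of _ p])
    fix q assume "(\<forall>i. coeff q i \<in> constants) \<and> poly q x = a"
    then have "range (coeff q) \<subseteq> constants" "poly q x = poly p x" using p(2) by auto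
    then show "q = p" using poly_x_unique [OF _ p(1)] by blast
  qed (use p in auto)
qed

lemma nu_x_dvd: "\<nu> x dvd \<nu> a"
proof -
  obtain p where "range (coeff p) \<subseteq> constants" "poly p x = a" using poly_x_exists by blast
  then show ?thesis using nu_poly_x by (cases "p = 0") auto
qed

lemma nu_add_x_le_of_less:
  assumes "\<nu> c < \<nu> a"
  shows "\<nu> c + \<nu> x \<le> \<nu> a"
proof -
  obtain j k where jk: "\<nu> c = \<nu> x * j" "\<nu> a = \<nu> x * k" using nu_x_dvd by (metis dvdE)
  then have "Suc j \<le> k" using assms by simp
  then have "\<nu> x * Suc j \<le> \<nu> x * k" by (rule mult_le_mono2)
  then show ?thesis using jk by simp
qed

end

context degree_euclidean
begin

lemma exists_generator:
  assumes "0 < \<nu> a"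
  obtains x where "degree_euclidean_generator \<sigma> x"
proof -
  obtain x where "0 < \<nu> x" "\<forall>b. 0 < \<nu> b \<longrightarrow> \<nu> x \<le> \<nu> b"
    using ex_has_least_nat [of "\<lambda>b. 0 < \<nu> b" a \<nu>] assms by blast
  then show thesis
    by (intro that degree_euclidean_generator.intro degree_euclidean_axioms
        degree_euclidean_generator_axioms.intro) auto
qed

lemma factroid_nu_le_closed:
  assumes "factroid F" "a \<in> F" "a \<noteq> 0" "\<nu> b \<le> \<nu> a"
  shows "b \<in> F"
  using assms(2-4)
proof (induction "\<nu> a" arbitrary: a b rule: less_induct)
  case less
  note F = \<open>factroid F\<close>
  have small: "c \<in> F" if "\<nu> c = 0" for c
  proof (cases "c = 0")
    case False
    then have "c dvd 1" using that nu_eq_0_iff by simp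
    then show ?thesis by (rule factroid_unit [OF F less.prems(1,2)])
  qed (simp add: factroid_zero [OF F])
  show ?case
  proof (cases "\<nu> a = 0")
    case False
    then have "0 < \<nu> a" by simp
    then obtain x where "degree_euclidean_generator \<sigma> x" by (rule exists_generator)
    then interpret degree_euclidean_generator \<sigma> x .
    obtain q r where qr: "a = x * q + r" "r \<in> constants" "q \<noteq> 0" "\<nu> a = \<nu> x + \<nu> q"
      using divide_by_x [OF \<open>0 < \<nu> a\<close>] by blast
    have "x * q \<in> F"
      using factroid_diff [OF F less.prems(1) small [of r]] qr(1,2) by (simp add: constants_def)
    then have "q \<in> F" using factroid_cancel [OF F x_nonzero] by blast
    then have below_q: "c \<in> F" if "\<nu> c \<le> \<nu> q" for c
      using less.hyps [of q c] qr(3,4) nu_x_pos that by simp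
    obtain s t where st: "b = a * s + t" "t = 0 \<or> \<nu> t < \<nu> a"
      using nu_division [OF less.prems(2)] by blast
    have "t \<in> F"
    proof (cases "t = 0")
      case False
      then have "\<nu> t + \<nu> x \<le> \<nu> a" using st(2) nu_add_x_le_of_less by blast
      then show ?thesis using below_q qr(4) by simp
    qed (simp add: factroid_zero [OF F])
    have "\<nu> s = 0" if "s \<noteq> 0"
    proof -
      have "\<nu> a + \<nu> s = \<nu> (b - t)" using st(1) nu_mult [OF less.prems(2) that] by simp
      also have "\<dots> \<le> \<nu> a" using nu_diff_le [of b t] st(2) less.prems(3) by auto
      finally show ?thesis by simp
    qed
    then have "a * s \<in> F"
      using factroid_mult_unit [OF F less.prems(1)] factroid_zero [OF F] nu_eq_0_iff
      by (cases "s = 0") auto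
    then show ?thesis using factroid_add [OF F _ \<open>t \<in> F\<close>] st(1) by simp
  qed (use less.prems(3) small in simp)
qed

lemma factroid_eq_C_set:
  assumes F: "factroid F"
  shows "F \<in> C_set \<sigma> ` (range \<sigma> \<union> {\<infinity>})"
proof (cases "F \<subseteq> {0}")
  case True
  then have "F = C_set \<sigma> (\<sigma> 0)"
    using factroid_zero [OF F] by (auto simp: C_set_def sigma_eq_minus_infinity_iff)
  then show ?thesis by blast
next
  case False
  then obtain a where a: "a \<in> F" "a \<noteq> 0" by blast
  show ?thesis
  proof (cases "finite (\<nu> ` F)")
    case True
    define S where "S = \<nu> ` (F - {0})"
    have "finite S" unfolding S_def using True by (rule finite_subset [rotated]) blast
    moreover have "S \<noteq> {}" using a by (auto simp: S_def)
    ultimately have "Max S \<in> S" by (rule Max_in)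
    then obtain m where m: "Max S = \<nu> m" "m \<in> F - {0}" unfolding S_def by (rule imageE)
    have "\<nu> b \<le> \<nu> m" if "b \<in> F" for b
    proof (cases "b = 0")
      case False
      then have "\<nu> b \<in> S" using that by (simp add: S_def)
      then show ?thesis using Max_ge [OF \<open>finite S\<close>] m(1) by simp
    qed simp
    then have "F = {b. \<nu> b \<le> \<nu> m}" using factroid_nu_le_closed [OF F, of m] m(2) by blast
    then have "F = C_set \<sigma> (\<sigma> m)" using C_set_sigma [of m] m(2) by simp
    then show ?thesis by blast
  next
    case False
    have "b \<in> F" for b
    proof -
      obtain c where "c \<in> F" "\<nu> b < \<nu> c"
        using False unfolding infinite_nat_iff_unbounded by blast
      then show ?thesis using factroid_nu_le_closed [OF F, of c b] by fastforce
    qed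
    then have "F = C_set \<sigma> \<infinity>" by (auto simp: C_set_def)
    then show ?thesis by blast
  qed
qed

lemma cond_e_holds: "cond_e \<sigma>"
  unfolding cond_e_def
proof (intro conjI)
  show "{F. factroid F} = C_set \<sigma> ` (range \<sigma> \<union> {\<infinity>})"
    using factroid_eq_C_set factroid_C_set by blast
  show "inj_on (C_set \<sigma>) (range \<sigma>)" by (rule inj_on_C_set)
  show "\<forall>m\<in>range \<sigma>. \<forall>n\<in>range \<sigma>. {x * y |x y. x \<in> D_set \<sigma> m \<and> y \<in> D_set \<sigma> n} \<subseteq> D_set \<sigma> (m + n)"
    using condition_a by (auto simp: cond_a_def D_set_def)
qed

lemma field_or_poly_ring: "is_field_dom TYPE('a) \<or> is_poly_ring_over_field TYPE('a)"
proof (cases "\<exists>a. 0 < \<nu> a")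
  case True
  then obtain a where "0 < \<nu> a" by blast
  then obtain x where "degree_euclidean_generator \<sigma> x" by (rule exists_generator)
  then have "is_poly_ring_over_field TYPE('a)" by (rule degree_euclidean_generator.is_poly_ring)
  then show ?thesis ..
next
  case False
  then show ?thesis unfolding is_field_dom_def using nu_eq_0_iff by blast
qed

end

lemma (in euclidean_fun) characterisation:
  "{a. \<sigma> a \<le> \<sigma> 1} = {a. a dvd 1} \<union> {0} \<and> (cond_a \<sigma> \<longleftrightarrow> cond_b \<sigma>) \<and>
   (cond_b \<sigma> \<longleftrightarrow> cond_c \<sigma>) \<and> (cond_c \<sigma> \<longleftrightarrow> cond_d \<sigma>) \<and> (cond_d \<sigma> \<longleftrightarrow> cond_e \<sigma>)"
proof -
  have "cond_c \<sigma> \<and> cond_e \<sigma>" if "cond_a \<sigma>"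
  proof -
    interpret degree_euclidean \<sigma> by unfold_locales (fact that)
    show ?thesis using cond_c_holds cond_e_holds by blast
  qed
  then show ?thesis using sigma_le_sigma_one
      cond_a_iff_cond_b cond_c_imp_cond_d cond_d_imp_cond_b cond_e_imp_cond_a by blast
qed

lemma ex_euclidean_cond_a_if_field:
  assumes "is_field_dom TYPE('a::idom)"
  shows "\<exists>\<sigma>::'a \<Rightarrow> ereal. euclidean_function \<sigma> \<and> cond_a \<sigma>"
proof -
  define \<sigma> :: "'a \<Rightarrow> ereal" where "\<sigma> a = (if a = 0 then -\<infinity> else 0)" for a
  have "euclidean_function \<sigma>"
    unfolding euclidean_function_def
  proof (intro conjI allI impI)
    fix a b :: 'a assume "b \<noteq> 0"
    then have "b dvd a" using assms unfolding is_field_dom_def by (meson dvd_trans one_dvd)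
    then obtain q where "a = b * q + 0" by (auto elim: dvdE)
    then show "\<exists>q r. a = b * q + r \<and> \<sigma> r < \<sigma> b" using \<open>b \<noteq> 0\<close> by (auto simp: \<sigma>_def)
  qed (auto simp: \<sigma>_def zero_ereal_def)
  moreover have "cond_a \<sigma>" by (simp add: cond_a_def nonarch_euclidean_def \<sigma>_def)
  ultimately show ?thesis by blast
qed

locale poly_presentation =
  fixes K :: "'a::idom set" and x :: 'a
  assumes subfield: "subfield K"
    and unique_poly: "\<And>a. \<exists>!p. range (coeff p) \<subseteq> K \<and> poly p x = a"
begin

definition coords :: "'a \<Rightarrow> 'a poly" where
  "coords a = (THE p. range (coeff p) \<subseteq> K \<and> poly p x = a)"

lemma coords: "range (coeff (coords a)) \<subseteq> K" "poly (coords a) x = a"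
  using theI' [OF unique_poly [of a]] unfolding coords_def by blast+

lemma coords_eqI: "range (coeff p) \<subseteq> K \<Longrightarrow> poly p x = a \<Longrightarrow> coords a = p"
  using the1_equality [OF unique_poly [of a]] unfolding coords_def by blast

lemma coords_add: "coords (a + b) = coords a + coords b"
  by (intro coords_eqI coeffs_in_subfield_add [OF subfield]) (simp_all add: coords)

lemma coords_diff: "coords (a - b) = coords a - coords b"
  by (intro coords_eqI coeffs_in_subfield_diff [OF subfield]) (simp_all add: coords)

lemma coords_mult: "coords (a * b) = coords a * coords b"
  by (intro coords_eqI coeffs_in_subfield_mult [OF subfield]) (simp_all add: coords)

lemma coords_eq_0_iff [simp]: "coords a = 0 \<longleftrightarrow> a = 0"
proof
  assume "a = 0"
  then show "coords a = 0" by (intro coords_eqI) (simp_all add: subfield_zero [OF subfield])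
qed (use coords(2) [of a] in simp)

lemma coords_monom: "c \<in> K \<Longrightarrow> coords (c * x ^ k) = monom c k"
  by (intro coords_eqI coeffs_in_subfield_monom [OF subfield]) (simp_all add: poly_monom)

lemma coords_division:
  assumes "b \<noteq> 0"
  shows "\<exists>q r. a = b * q + r \<and> (r = 0 \<or> degree (coords r) < degree (coords b))"
proof (induction "degree (coords a)" arbitrary: a rule: less_induct)
  case less
  show ?case
  proof (cases "a \<noteq> 0 \<and> degree (coords b) \<le> degree (coords a)")
    case False
    then have "a = b * 0 + a \<and> (a = 0 \<or> degree (coords a) < degree (coords b))" by auto
    then show ?thesis by blast
  next
    case True
    define k where "k = degree (coords a) - degree (coords b)"
    have "lead_coeff (coords b) \<in> K" "lead_coeff (coords b) \<noteq> 0"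
      using coords(1) [of b] assms by auto
    then obtain v where v: "v \<in> K" "lead_coeff (coords b) * v = 1"
      using subfield_inverse [OF subfield] by blast
    define c where "c = lead_coeff (coords a) * v"
    have "c \<in> K" unfolding c_def using coords(1) [of a] v(1) subfield_mult [OF subfield] by blast
    have lead: "c * lead_coeff (coords b) = lead_coeff (coords a)"
      using v(2) by (simp add: c_def ac_simps)
    define a' where "a' = a - c * x ^ k * b"
    have "coords a' = coords a - monom c k * coords b"
      by (simp only: a'_def coords_diff coords_mult [of "c * x ^ k" b] coords_monom [OF \<open>c \<in> K\<close>])
    then have "a' = 0 \<or> degree (coords a') < degree (coords a)"
      using degree_cancel_lead_coeff [of "coords b" "coords a" c] True lead by (auto simp: k_def)
    then obtain q r where qr: "a' = b * q + r" "r = 0 \<or> degree (coords r) < degree (coords b)"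
      using less [of a'] by (metis add.right_neutral mult_zero_right)
    have "a = a' + c * x ^ k * b" by (simp add: a'_def)
    also have "\<dots> = b * (q + c * x ^ k) + r" using qr(1) by (simp add: algebra_simps)
    finally show ?thesis using qr(2) by blast
  qed
qed

definition deg :: "'a \<Rightarrow> ereal" where
  "deg a = (if a = 0 then -\<infinity> else ereal (real (degree (coords a))))"

lemma deg_mult: "deg (a * b) = deg a + deg b"
  by (simp add: deg_def coords_mult degree_mult_eq)

lemma deg_add_le: "deg (a + b) \<le> max (deg a) (deg b)"
  using degree_add_le_max [of "coords a" "coords b"]
  by (auto simp: deg_def coords_add max_def)

lemma euclidean_function_deg: "euclidean_function deg"
  unfolding euclidean_function_def
proof (intro conjI allI impI)
  fix a b :: 'a assume "b \<noteq> 0"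
  then obtain q r where "a = b * q + r" "r = 0 \<or> degree (coords r) < degree (coords b)"
    using coords_division by blast
  moreover from this have "deg r < deg b" using \<open>b \<noteq> 0\<close> by (auto simp: deg_def)
  ultimately show "\<exists>q r. a = b * q + r \<and> deg r < deg b" by blast
  show "deg a \<le> deg (a * b)" using \<open>b \<noteq> 0\<close> by (simp add: deg_mult) (simp add: deg_def)
qed (simp_all add: deg_def)

lemma cond_a_deg: "cond_a deg"
  unfolding cond_a_def nonarch_euclidean_def using deg_add_le deg_mult by blast

end

lemma ex_euclidean_cond_a_if_poly_ring:
  assumes "is_poly_ring_over_field TYPE('a::idom)"
  shows "\<exists>\<sigma>::'a \<Rightarrow> ereal. euclidean_function \<sigma> \<and> cond_a \<sigma>"
proof -
  obtain K :: "'a set" and x where K: "subfield K"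
    and unique: "\<And>a. \<exists>!p. (\<forall>i. coeff p i \<in> K) \<and> poly p x = a"
    using assms unfolding is_poly_ring_over_field_def by blast
  interpret poly_presentation K x
    using K unique by unfold_locales (simp_all add: image_subset_iff)
  show ?thesis using euclidean_function_deg cond_a_deg by blast
qed

theorem proposition8p4:
  shows "(\<forall>\<sigma>::'a::idom \<Rightarrow> ereal. euclidean_function \<sigma> \<longrightarrow>
            {a. \<sigma> a \<le> \<sigma> 1} = {a. a dvd 1} \<union> {0} \<and>
            (cond_a \<sigma> \<longleftrightarrow> cond_b \<sigma>) \<and> (cond_b \<sigma> \<longleftrightarrow> cond_c \<sigma>) \<and>
            (cond_c \<sigma> \<longleftrightarrow> cond_d \<sigma>) \<and> (cond_d \<sigma> \<longleftrightarrow> cond_e \<sigma>)) \<and>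
         ((\<exists>\<sigma>::'a \<Rightarrow> ereal. euclidean_function \<sigma> \<and> cond_a \<sigma>) \<longleftrightarrow>
            is_field_dom TYPE('a) \<or> is_poly_ring_over_field TYPE('a))"
proof
  show "\<forall>\<sigma>::'a \<Rightarrow> ereal. euclidean_function \<sigma> \<longrightarrow>
      {a. \<sigma> a \<le> \<sigma> 1} = {a. a dvd 1} \<union> {0} \<and> (cond_a \<sigma> \<longleftrightarrow> cond_b \<sigma>) \<and>
      (cond_b \<sigma> \<longleftrightarrow> cond_c \<sigma>) \<and> (cond_c \<sigma> \<longleftrightarrow> cond_d \<sigma>) \<and> (cond_d \<sigma> \<longleftrightarrow> cond_e \<sigma>)"
    by (intro allI impI) (rule euclidean_fun.characterisation [OF euclidean_fun.intro])
  show "(\<exists>\<sigma>::'a \<Rightarrow> ereal. euclidean_function \<sigma> \<and> cond_a \<sigma>) \<longleftrightarrow>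
      is_field_dom TYPE('a) \<or> is_poly_ring_over_field TYPE('a)"
  proof
    assume "\<exists>\<sigma>::'a \<Rightarrow> ereal. euclidean_function \<sigma> \<and> cond_a \<sigma>"
    then show "is_field_dom TYPE('a) \<or> is_poly_ring_over_field TYPE('a)"
      by (metis degree_euclidean.field_or_poly_ring degree_euclidean.intro
          degree_euclidean_axioms.intro euclidean_fun.intro)
  qed (use ex_euclidean_cond_a_if_field ex_euclidean_cond_a_if_poly_ring in blast)
qed

end
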